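(* The policy Match the Longest is non-expansive: for all $x,x'\in\mathbb X$, all $v\in\mathcal V$ and all $\sigma\in\mathcal S$, $$\|x'\circledcirc_{\textsc{ml}}(v,\sigma)-x\circledcirc_{\textsc{ml}}(v,\sigma)\|_1\le\|x'-x\|_1.$$
   Context: $G=(\mathcal V,\mathcal E)$ is a finite connected simple graph, $i - j$ denotes adjacency, $\mathcal E(v)$ the neighbours of $v$. $\mathbb X=\{x\in\mathbb N^{\mathcal V}: x(i)x(j)=0 \text{ whenever } i - j\}$. A list of preferences $\sigma=(\sigma(i))_{i\in\mathcal V}\in\mathcal S$ gives for each class $i$ a linear ordering $\sigma(i)$ of $\mathcal E(i)$; for ML these are drawn uniformly on $\mathcal S$. With $\mathcal P(x,v)=\{j\in\mathcal E(v):x(j)>0\}$, set $x\circledcirc_{\textsc{ml}}(v,\sigma)=x+\mathbf e_v$ if $\mathcal P(x,v)=\emptyset$, and $x-\mathbf e_{p(x,v,\sigma)}$ otherwise, where $\mathbf e_i$ is the $i$-th canonical basis vector and $p(x,v,\sigma)$ is the first element, in the ordering $\sigma(v)$, of $\mathcal L(x,v)=\{i\in\mathcal E(v):x(i)=\max_{j\in\mathcal E(v)}x(j)\}$. *)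

theory Defs
  imports Main
begin

definition simple_graph :: "'v set \<Rightarrow> ('v \<Rightarrow> 'v \<Rightarrow> bool) \<Rightarrow> bool" where
  "simple_graph V E \<longleftrightarrow> finite V \<and> V \<noteq> {} \<and>
     (\<forall>i j. E i j \<longrightarrow> i \<in> V \<and> j \<in> V) \<and>
     (\<forall>i j. E i j \<longrightarrow> E j i) \<and> (\<forall>i. \<not> E i i)"

definition connected_graph :: "'v set \<Rightarrow> ('v \<Rightarrow> 'v \<Rightarrow> bool) \<Rightarrow> bool" where
  "connected_graph V E \<longleftrightarrow> (\<forall>i\<in>V. \<forall>j\<in>V. E\<^sup>*\<^sup>* i j)"

definition nbrs :: "'v set \<Rightarrow> ('v \<Rightarrow> 'v \<Rightarrow> bool) \<Rightarrow> 'v \<Rightarrow> 'v set" where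
  "nbrs V E v = {j \<in> V. E v j}"

definition states :: "'v set \<Rightarrow> ('v \<Rightarrow> 'v \<Rightarrow> bool) \<Rightarrow> ('v \<Rightarrow> nat) set" where
  "states V E = {x. (\<forall>i. i \<notin> V \<longrightarrow> x i = 0) \<and> (\<forall>i j. E i j \<longrightarrow> x i * x j = 0)}"

(* \<S>: for each class i, sigma i is a linear ordering of \<E>(i), given as a
   duplicate-free list enumerating \<E>(i) (earlier = preferred). *)
definition prefs :: "'v set \<Rightarrow> ('v \<Rightarrow> 'v \<Rightarrow> bool) \<Rightarrow> ('v \<Rightarrow> 'v list) set" where
  "prefs V E = {\<sigma>. \<forall>i\<in>V. distinct (\<sigma> i) \<and> set (\<sigma> i) = nbrs V E i}"

definition Pset :: "'v set \<Rightarrow> ('v \<Rightarrow> 'v \<Rightarrow> bool) \<Rightarrow> ('v \<Rightarrow> nat) \<Rightarrow> 'v \<Rightarrow> 'v set" where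
  "Pset V E x v = {j \<in> nbrs V E v. x j > 0}"

definition Lset :: "'v set \<Rightarrow> ('v \<Rightarrow> 'v \<Rightarrow> bool) \<Rightarrow> ('v \<Rightarrow> nat) \<Rightarrow> 'v \<Rightarrow> 'v set" where
  "Lset V E x v = {i \<in> nbrs V E v. x i = Max (x ` nbrs V E v)}"

definition pML :: "'v set \<Rightarrow> ('v \<Rightarrow> 'v \<Rightarrow> bool) \<Rightarrow> ('v \<Rightarrow> nat) \<Rightarrow> 'v \<Rightarrow> ('v \<Rightarrow> 'v list) \<Rightarrow> 'v" where
  "pML V E x v \<sigma> = hd (filter (\<lambda>i. i \<in> Lset V E x v) (\<sigma> v))"

definition ml_step :: "'v set \<Rightarrow> ('v \<Rightarrow> 'v \<Rightarrow> bool) \<Rightarrow> ('v \<Rightarrow> nat) \<Rightarrow> 'v \<Rightarrow> ('v \<Rightarrow> 'v list) \<Rightarrow> ('v \<Rightarrow> nat)" where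
  "ml_step V E x v \<sigma> =
     (if Pset V E x v = {} then x(v := x v + 1)
      else (let p = pML V E x v \<sigma> in x(p := x p - 1)))"

definition diff1 :: "'v set \<Rightarrow> ('v \<Rightarrow> nat) \<Rightarrow> ('v \<Rightarrow> nat) \<Rightarrow> int" where
  "diff1 V x y = (\<Sum>i\<in>V. \<bar>int (x i) - int (y i)\<bar>)"

end

theory Submission
  imports Defs
begin

text \<open>Only the coordinates touched by the two transitions
  can change the \<open>\<ell>\<^sub>1\<close> distance. If exactly one state sees an arrival, then v is empty in the
  other state (it has a positive neighbour there) and the matched class is empty in the
  first, so the gain at v is cancelled by the loss at the matched class. If both states see a
  departure at different classes p and q, then by the consistency of the tie-breaking rule
  one of them moves towards the other state, which compensates for the other's move.\<close>

lemma hd_filter_eq_hd_filter: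
  assumes "filter P xs \<noteq> []" "filter Q xs \<noteq> []"
    and "Q (hd (filter P xs))" "P (hd (filter Q xs))"
  shows "hd (filter P xs) = hd (filter Q xs)"
  using assms by (induction xs) (auto split: if_splits)

lemma diff1_commute: "diff1 V x y = diff1 V y x"
  unfolding diff1_def by (simp add: abs_minus_commute)

lemma diff1_diff_eq_sum_changed:
  assumes "finite V" "S \<subseteq> V"
    and "\<And>i. i \<in> V - S \<Longrightarrow> y' i = x' i \<and> y i = x i"
  shows "diff1 V y' y - diff1 V x' x =
    (\<Sum>i\<in>S. \<bar>int (y' i) - int (y i)\<bar> - \<bar>int (x' i) - int (x i)\<bar>)"
proof -
  let ?d = "\<lambda>i. \<bar>int (y' i) - int (y i)\<bar> - \<bar>int (x' i) - int (x i)\<bar>"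
  have "diff1 V y' y - diff1 V x' x = sum ?d V"
    unfolding diff1_def by (simp add: sum_subtractf)
  also have "\<dots> = sum ?d S"
    using assms by (intro sum.mono_neutral_right) auto
  finally show ?thesis .
qed

lemma nbrs_finite: "simple_graph V E \<Longrightarrow> finite (nbrs V E v)"
  unfolding simple_graph_def nbrs_def by auto

lemma nbrs_adjacent:
  assumes "simple_graph V E" "p \<in> nbrs V E v"
  shows "E v p" "p \<in> V" "p \<noteq> v"
  using assms unfolding simple_graph_def nbrs_def by auto

lemma ml_step_arrival: "Pset V E x v = {} \<Longrightarrow> ml_step V E x v \<sigma> = x(v := x v + 1)"
  unfolding ml_step_def by simp

lemma ml_step_departure:
  "Pset V E x v \<noteq> {} \<Longrightarrow> ml_step V E x v \<sigma> = x(pML V E x v \<sigma> := x (pML V E x v \<sigma>) - 1)"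
  unfolding ml_step_def by (simp add: Let_def)

lemma Pset_empty_nbr: "Pset V E x v = {} \<Longrightarrow> p \<in> nbrs V E v \<Longrightarrow> x p = 0"
  unfolding Pset_def by auto

lemma Lset_filter_nonempty:
  assumes "simple_graph V E" "\<sigma> \<in> prefs V E" "v \<in> V" "Pset V E x v \<noteq> {}"
  shows "filter (\<lambda>i. i \<in> Lset V E x v) (\<sigma> v) \<noteq> []"
proof -
  have "nbrs V E v \<noteq> {}" using assms(4) unfolding Pset_def by auto
  then have "Max (x ` nbrs V E v) \<in> x ` nbrs V E v"
    using nbrs_finite[OF assms(1)] by (intro Max_in) auto
  then obtain m where m: "m \<in> nbrs V E v" "x m = Max (x ` nbrs V E v)" by force
  then have "m \<in> Lset V E x v" unfolding Lset_def by auto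
  moreover have "set (\<sigma> v) = nbrs V E v" using assms(2,3) unfolding prefs_def by auto
  ultimately show ?thesis using m(1) by (auto simp: filter_empty_conv)
qed

lemma pML_in_Lset:
  assumes "simple_graph V E" "\<sigma> \<in> prefs V E" "v \<in> V" "Pset V E x v \<noteq> {}"
  shows "pML V E x v \<sigma> \<in> Lset V E x v"
  using hd_in_set[OF Lset_filter_nonempty[OF assms]] unfolding pML_def by simp

lemma pML_nbr:
  assumes "simple_graph V E" "\<sigma> \<in> prefs V E" "v \<in> V" "Pset V E x v \<noteq> {}"
  shows "pML V E x v \<sigma> \<in> nbrs V E v"
  using pML_in_Lset[OF assms] unfolding Lset_def by simp

lemma pML_pos:
  assumes "simple_graph V E" "\<sigma> \<in> prefs V E" "v \<in> V" "Pset V E x v \<noteq> {}"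
  shows "x (pML V E x v \<sigma>) > 0"
proof -
  obtain j where j: "j \<in> nbrs V E v" "x j > 0" using assms(4) unfolding Pset_def by auto
  have "x j \<le> Max (x ` nbrs V E v)" using j(1) nbrs_finite[OF assms(1)] by simp
  then show ?thesis using j(2) pML_in_Lset[OF assms] unfolding Lset_def by auto
qed

text \<open>If the two preferred classes differ, they cannot both be longest in both states, since
  then the same preference list \<open>\<sigma> v\<close> would pick the same class.\<close>
lemma pML_neq_imp_strict:
  assumes g: "simple_graph V E" and s: "\<sigma> \<in> prefs V E" and v: "v \<in> V"
    and P: "Pset V E x v \<noteq> {}" and P': "Pset V E x' v \<noteq> {}"
    and pq: "pML V E x v \<sigma> \<noteq> pML V E x' v \<sigma>"
  shows "x' (pML V E x v \<sigma>) < x (pML V E x v \<sigma>) \<or> x (pML V E x' v \<sigma>) < x' (pML V E x' v \<sigma>)"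
    (is "x' ?p < x ?p \<or> x ?q < x' ?q")
proof (rule ccontr)
  assume "\<not> ?thesis"
  then have le: "x ?p \<le> x' ?p" "x' ?q \<le> x ?q" by auto
  have fin: "finite (nbrs V E v)" using nbrs_finite[OF g] .
  have p: "?p \<in> nbrs V E v" "x ?p = Max (x ` nbrs V E v)"
    using pML_in_Lset[OF g s v P] unfolding Lset_def by auto
  have q: "?q \<in> nbrs V E v" "x' ?q = Max (x' ` nbrs V E v)"
    using pML_in_Lset[OF g s v P'] unfolding Lset_def by auto
  have "x ?q \<le> x ?p" "x' ?p \<le> x' ?q" using p q fin by simp_all
  with le have "?q \<in> Lset V E x v" "?p \<in> Lset V E x' v"
    using p q unfolding Lset_def by auto
  then have "?p = ?q"
    unfolding pML_def
    by (intro hd_filter_eq_hd_filter Lset_filter_nonempty[OF g s v P] Lset_filter_nonempty[OF g s v P'])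
      (simp_all add: pML_def[symmetric])
  with pq show False by simp
qed

lemma diff1_ml_step_arrival_departure:
  assumes g: "simple_graph V E" and s: "\<sigma> \<in> prefs V E" and v: "v \<in> V"
    and x': "x' \<in> states V E" and P: "Pset V E x v = {}" and P': "Pset V E x' v \<noteq> {}"
  shows "diff1 V (ml_step V E x' v \<sigma>) (ml_step V E x v \<sigma>) = diff1 V x' x"
proof -
  let ?p = "pML V E x' v \<sigma>"
  have p: "E v ?p" "?p \<in> V" "?p \<noteq> v" using nbrs_adjacent[OF g pML_nbr[OF g s v P']] by auto
  have x'p: "x' ?p > 0" using pML_pos[OF g s v P'] .
  have "x' v * x' ?p = 0" using x' p(1) unfolding states_def by blast
  then have "x' v = 0" using x'p by simp
  moreover have "x ?p = 0" using Pset_empty_nbr[OF P pML_nbr[OF g s v P']] .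
  moreover have "diff1 V (ml_step V E x' v \<sigma>) (ml_step V E x v \<sigma>) - diff1 V x' x =
      (\<Sum>i\<in>{v, ?p}. \<bar>int (ml_step V E x' v \<sigma> i) - int (ml_step V E x v \<sigma> i)\<bar>
        - \<bar>int (x' i) - int (x i)\<bar>)"
    using g v p by (intro diff1_diff_eq_sum_changed)
      (auto simp: simple_graph_def ml_step_arrival[OF P] ml_step_departure[OF P'])
  ultimately show ?thesis
    using p(3) x'p by (simp add: ml_step_arrival[OF P] ml_step_departure[OF P'])
qed

lemma diff1_ml_step_departures:
  assumes g: "simple_graph V E" and s: "\<sigma> \<in> prefs V E" and v: "v \<in> V"
    and P: "Pset V E x v \<noteq> {}" and P': "Pset V E x' v \<noteq> {}"
  shows "diff1 V (ml_step V E x' v \<sigma>) (ml_step V E x v \<sigma>) \<le> diff1 V x' x"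
proof -
  let ?p = "pML V E x v \<sigma>" and ?q = "pML V E x' v \<sigma>"
  have xp: "x ?p > 0" and x'q: "x' ?q > 0" using pML_pos[OF g s v P] pML_pos[OF g s v P'] .
  have S: "{?p, ?q} \<subseteq> V"
    using nbrs_adjacent(2)[OF g pML_nbr[OF g s v P]] nbrs_adjacent(2)[OF g pML_nbr[OF g s v P']]
    by simp
  have "diff1 V (ml_step V E x' v \<sigma>) (ml_step V E x v \<sigma>) - diff1 V x' x =
      (\<Sum>i\<in>{?p, ?q}. \<bar>int (ml_step V E x' v \<sigma> i) - int (ml_step V E x v \<sigma> i)\<bar>
        - \<bar>int (x' i) - int (x i)\<bar>)"
    using g S by (intro diff1_diff_eq_sum_changed)
      (auto simp: simple_graph_def ml_step_departure[OF P] ml_step_departure[OF P'])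
  moreover have "?p \<noteq> ?q \<Longrightarrow> x' ?p < x ?p \<or> x ?q < x' ?q"
    using pML_neq_imp_strict[OF g s v P P'] .
  ultimately show ?thesis
    using xp x'q by (cases "?p = ?q") (auto simp: ml_step_departure[OF P] ml_step_departure[OF P'])
qed

theorem mainTheorem7:
  fixes V :: "'v set" and E :: "'v \<Rightarrow> 'v \<Rightarrow> bool"
  assumes "simple_graph V E" and "connected_graph V E"
    and "x \<in> states V E" and "x' \<in> states V E"
    and "v \<in> V" and "\<sigma> \<in> prefs V E"
  shows "diff1 V (ml_step V E x' v \<sigma>) (ml_step V E x v \<sigma>) \<le> diff1 V x' x"
proof (cases "Pset V E x v = {}"; cases "Pset V E x' v = {}")
  assume "Pset V E x v = {}" "Pset V E x' v = {}"
  then have "diff1 V (ml_step V E x' v \<sigma>) (ml_step V E x v \<sigma>) = diff1 V x' x"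
    unfolding diff1_def by (intro sum.cong) (auto simp: ml_step_arrival)
  then show ?thesis by simp
next
  assume "Pset V E x v = {}" "Pset V E x' v \<noteq> {}"
  from diff1_ml_step_arrival_departure[OF assms(1,6,5,4) this] show ?thesis by simp
next
  assume "Pset V E x v \<noteq> {}" "Pset V E x' v = {}"
  from diff1_ml_step_arrival_departure[OF assms(1,6,5,3) this(2,1)] show ?thesis
    by (simp add: diff1_commute)
next
  assume "Pset V E x v \<noteq> {}" "Pset V E x' v \<noteq> {}"
  from diff1_ml_step_departures[OF assms(1,6,5) this] show ?thesis .
qed

end
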